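(* Let $G$ be a connected graph with vertex set $V$, and let $V'$ be the set of new vertices (one for each edge of $G$) so that both the subdivision $S(G)$ and the triangulation $T(G)$ have vertex set $V\cup V'$ (the new vertex associated with the edge $kl$ being the same in both graphs). Denote by $\Omega^S_{ij}$ and $\Omega^T_{ij}$ the resistance distances between $i$ and $j$ in $S(G)$ and $T(G)$ respectively. Then: (1) for $i,j\in V$, $\Omega^T_{ij}=\frac{1}{3}\Omega^S_{ij}$; (2) for $i\in V'$ and $j\in V$, $\Omega^T_{ij}=\frac{1}{3}\Omega^S_{ij}+\frac{1}{3}$; (3) for distinct $i,j\in V'$, $\Omega^T_{ij}=\frac{1}{3}\Omega^S_{ij}+\frac{2}{3}$.
   Context: All graphs are finite, undirected, without loops or multiple edges. For a connected graph $H$ and vertices $i,j$, the resistance distance between $i$ and $j$ is the effective resistance between them in the electrical network obtained from $H$ by replacing each edge by a unit resistor. The subdivision $S(G)$ is obtained from $G$ by replacing each edge $kl$ by a path $k\,w\,l$ through a new vertex $w$. The triangulation $T(G)$ is obtained from $G$ by adding, for each edge $kl$, a new vertex $w$ adjacent to both $k$ and $l$ (keeping the edge $kl$), so each edge becomes a triangle. *)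

theory Defs
  imports Complex_Main
begin

definition simple_graph :: "'a set \<Rightarrow> 'a set set \<Rightarrow> bool" where
  "simple_graph V E \<longleftrightarrow> finite V \<and>
     (\<forall>e\<in>E. \<exists>x y. x \<noteq> y \<and> x \<in> V \<and> y \<in> V \<and> e = {x, y})"

definition adj :: "'a set set \<Rightarrow> 'a \<Rightarrow> 'a \<Rightarrow> bool" where
  "adj E x y \<longleftrightarrow> x \<noteq> y \<and> {x, y} \<in> E"

definition connected_graph :: "'a set \<Rightarrow> 'a set set \<Rightarrow> bool" where
  "connected_graph V E \<longleftrightarrow> V \<noteq> {} \<and> (\<forall>x\<in>V. \<forall>y\<in>V. (adj E)\<^sup>*\<^sup>* x y)"

text \<open>Resistance distance: inject a unit current at i and extract it at j; by Kirchhoff's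
  current law and Ohm's law (unit resistors) the node potentials v satisfy
  sum over neighbours y of x of (v x - v y) = net injected current at x.
  The effective resistance is the resulting potential difference v i - v j
  (well defined for a connected graph, potentials being unique up to a constant).\<close>

definition resistance :: "'a set \<Rightarrow> 'a set set \<Rightarrow> 'a \<Rightarrow> 'a \<Rightarrow> real" where
  "resistance V E i j = (THE r. \<exists>v :: 'a \<Rightarrow> real.
      (\<forall>x\<in>V. (\<Sum>y\<in>{y\<in>V. adj E x y}. v x - v y) =
               (if x = i then 1 else 0) - (if x = j then 1 else 0))
      \<and> r = v i - v j)"

definition sub_vertices :: "'a set \<Rightarrow> 'a set set \<Rightarrow> ('a + 'a set) set" where
  "sub_vertices V E = Inl ` V \<union> Inr ` E"

definition subdivision_edges :: "'a set set \<Rightarrow> ('a + 'a set) set set" where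
  "subdivision_edges E = {{Inl k, Inr e} | k e. e \<in> E \<and> k \<in> e}"

definition triangulation_edges :: "'a set set \<Rightarrow> ('a + 'a set) set set" where
  "triangulation_edges E = subdivision_edges E \<union> (\<lambda>e. Inl ` e) ` E"

end

theory Submission
  imports Defs "Jordan_Normal_Form.Determinant"
begin

text \<open>If v is the potential in S(G) for an injected current b, then on T(G) the potential u
  with u = v/3 on old vertices and u = (v + b)/3 on new vertices satisfies Kirchhoff's law for
  the same b. At the new vertex w of an edge kl both graphs give w the neighbours k and l, and
  Kirchhoff's law in S(G), b w = 2 v w - v k - v l, is exactly what makes 2 u w - u k - u l = b w.
  At an old vertex k, each incident edge kl with new vertex w contributes
  (u k - u w) + (u k - u l) = v k - v w, its contribution in S(G). Taking potential differences,
  each endpoint in V' carries the extra term b/3 = 1/3.\<close>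

definition neighbours :: "'b set \<Rightarrow> 'b set set \<Rightarrow> 'b \<Rightarrow> 'b set" where
  "neighbours X F x = {y\<in>X. adj F x y}"

definition laplacian :: "'b set \<Rightarrow> 'b set set \<Rightarrow> ('b \<Rightarrow> real) \<Rightarrow> 'b \<Rightarrow> real" where
  "laplacian X F v x = (\<Sum>y\<in>neighbours X F x. v x - v y)"

lemma adj_commute: "adj F x y = adj F y x"
  unfolding adj_def by (auto simp: insert_commute)

lemma laplacian_diff: "laplacian X F (\<lambda>x. w x - v x) x = laplacian X F w x - laplacian X F v x"
  unfolding laplacian_def by (simp add: sum_subtractf[symmetric] algebra_simps)

lemma sum_laplacian_eq_0:
  assumes "finite X"
  shows "(\<Sum>x\<in>X. laplacian X F v x) = 0"
proof -
  define S where "S = (\<Sum>x\<in>X. \<Sum>y\<in>X. if adj F x y then v x - v y else 0)"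
  have "S = (\<Sum>y\<in>X. \<Sum>x\<in>X. if adj F x y then v x - v y else 0)"
    unfolding S_def by (rule sum.swap)
  also have "\<dots> = (\<Sum>y\<in>X. \<Sum>x\<in>X. - (if adj F y x then v y - v x else 0))"
    by (intro sum.cong refl) (auto simp: adj_commute)
  also have "\<dots> = - S"
    unfolding S_def by (simp add: sum_negf)
  finally have "S = 0" by simp
  then show ?thesis
    unfolding S_def laplacian_def neighbours_def using assms by (simp add: sum.inter_filter)
qed

lemma linear_system_solvable_if_injective:
  fixes c :: "'b \<Rightarrow> 'b \<Rightarrow> real"
  assumes fin: "finite X"
    and inj: "\<And>v. \<forall>x\<in>X. (\<Sum>y\<in>X. c x y * v y) = 0 \<Longrightarrow> \<forall>x\<in>X. v x = 0"
  shows "\<exists>v. \<forall>x\<in>X. (\<Sum>y\<in>X. c x y * v y) = b x"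
proof -
  define n where "n = card X"
  obtain h where h: "bij_betw h {0..<n} X"
    using ex_bij_betw_nat_finite[OF fin] n_def by auto
  define g where "g = the_inv_into {0..<n} h"
  have gh: "g (h q) = q" if "q < n" for q
    unfolding g_def using that bij_betw_imp_inj_on[OF h] by (simp add: the_inv_into_f_f)
  have hg: "h (g x) = x" if "x \<in> X" for x
    unfolding g_def using that h by (simp add: f_the_inv_into_f_bij_betw)
  have g_less: "g x < n" if "x \<in> X" for x
    unfolding g_def using that bij_betw_the_inv_into[OF h] by (auto simp: bij_betw_def)
  have h_in: "h q \<in> X" if "q < n" for q
    using h that by (auto simp: bij_betw_def)
  define A where "A = mat n n (\<lambda>(p, q). c (h p) (h q))"
  have A: "A \<in> carrier_mat n n" unfolding A_def by simp
  define vec_of where "vec_of v = vec n (\<lambda>q. v (h q))" for v :: "'b \<Rightarrow> real"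
  have A_vec_of: "(A *\<^sub>v vec_of v) $ g x = (\<Sum>y\<in>X. c x y * v y)" if "x \<in> X" for x v
  proof -
    have "(A *\<^sub>v vec_of v) $ g x = (\<Sum>q\<in>{0..<n}. c (h (g x)) (h q) * v (h q))"
      using g_less[OF that] unfolding A_def vec_of_def by (simp add: scalar_prod_def)
    also have "\<dots> = (\<Sum>y\<in>X. c x y * v y)"
      unfolding hg[OF that] by (rule sum.reindex_bij_betw[OF h])
    finally show ?thesis .
  qed
  have vec_of_fun: "vec_of (\<lambda>y. w $ g y) = w" if "w \<in> carrier_vec n" for w
    using that unfolding vec_of_def by (intro eq_vecI) (auto simp: gh)
  have "det A \<noteq> 0"
  proof
    assume "det A = 0"
    then obtain w where w: "w \<in> carrier_vec n" "w \<noteq> 0\<^sub>v n" "A *\<^sub>v w = 0\<^sub>v n"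
      using det_0_iff_vec_prod_zero_field[OF A] by auto
    have "\<forall>x\<in>X. (\<Sum>y\<in>X. c x y * w $ g y) = 0"
      using A_vec_of[where v = "\<lambda>y. w $ g y"] w g_less by (simp add: vec_of_fun)
    then have "\<forall>x\<in>X. w $ g x = 0" by (rule inj)
    then have "w $ q = 0" if "q < n" for q
      using h_in[OF that] gh[OF that] by metis
    then have "w = 0\<^sub>v n"
      using w(1) by (intro eq_vecI) auto
    with w(2) show False ..
  qed
  then have "A \<in> Units (ring_mat TYPE(real) n ())"
    by (rule det_non_zero_imp_unit[OF A])
  then obtain B where B: "B \<in> carrier_mat n n" "A * B = 1\<^sub>m n"
    unfolding Units_def ring_mat_def by auto
  define w where "w = B *\<^sub>v vec_of b"
  have w: "w \<in> carrier_vec n" unfolding w_def vec_of_def using B by simp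
  have "A *\<^sub>v w = vec_of b"
    using assoc_mult_mat_vec[of A n n B n "vec_of b"] A B by (simp add: w_def vec_of_def)
  then have "\<forall>x\<in>X. (\<Sum>y\<in>X. c x y * w $ g y) = b x"
    using A_vec_of[where v = "\<lambda>y. w $ g y"] g_less hg by (simp add: vec_of_fun[OF w] vec_of_def)
  then show ?thesis by (rule exI[where x = "\<lambda>y. w $ g y"])
qed

locale resistor_network =
  fixes X :: "'b set" and F :: "'b set set"
  assumes finite_nodes: "finite X"
    and adj_nodes: "adj F x y \<Longrightarrow> x \<in> X \<and> y \<in> X"
    and connected: "x \<in> X \<Longrightarrow> y \<in> X \<Longrightarrow> (adj F)\<^sup>*\<^sup>* x y"
begin

lemma harmonic_imp_constant:
  assumes harmonic: "\<And>x. x \<in> X \<Longrightarrow> laplacian X F d x = 0"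
    and x: "x \<in> X" and y: "y \<in> X"
  shows "d x = d y"
proof -
  define m where "m = Max (d ` X)"
  have "m \<in> d ` X" unfolding m_def using finite_nodes x by (intro Max_in) auto
  then obtain x0 where x0: "x0 \<in> X" "d x0 = m" by auto
  have le_max: "d z \<le> m" if "z \<in> X" for z unfolding m_def using finite_nodes that by auto
  have reach_max: "d z = m" if "(adj F)\<^sup>*\<^sup>* x0 z" for z
    using that
  proof (induction rule: rtranclp_induct)
    case base
    then show ?case using x0 by simp
  next
    case (step a z)
    have a: "a \<in> X" and z: "z \<in> X" using adj_nodes[OF step.hyps(2)] by auto
    have "(\<Sum>y\<in>neighbours X F a. d a - d y) = 0"
      using harmonic[OF a] unfolding laplacian_def .
    moreover have "\<forall>y\<in>neighbours X F a. 0 \<le> d a - d y"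
      using le_max step.IH by (auto simp: neighbours_def)
    moreover have "finite (neighbours X F a)"
      using finite_nodes by (simp add: neighbours_def)
    ultimately have "\<forall>y\<in>neighbours X F a. d a - d y = 0"
      by (simp add: sum_nonneg_eq_0_iff)
    then show ?case using z step.hyps(2) step.IH by (auto simp: neighbours_def)
  qed
  show ?thesis using reach_max connected x0(1) x y by metis
qed

lemma laplacian_solvable:
  assumes balanced: "(\<Sum>x\<in>X. b x) = 0"
  shows "\<exists>v. \<forall>x\<in>X. laplacian X F v x = b x"
proof (cases "X = {}")
  case False
  then obtain j where j: "j \<in> X" by blast
  text \<open>Grounding j makes the Laplacian injective: the grounded operator sums over X to v j,
    so if it vanishes, v is harmonic with v j = 0.\<close>
  define M where "M v x = laplacian X F v x + (if x = j then v j else 0)" for v x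
  define c where "c x y = (if x = y then real (card (neighbours X F x)) else 0)
      - (if adj F x y then 1 else 0) + (if x = j \<and> y = j then 1 else 0)" for x y
  have M_linear: "(\<Sum>y\<in>X. c x y * v y) = M v x" if x: "x \<in> X" for x v
  proof -
    have "(\<Sum>y\<in>X. c x y * v y) = (\<Sum>y\<in>X. if x = y then real (card (neighbours X F x)) * v y else 0)
        - (\<Sum>y\<in>X. if adj F x y then v y else 0) + (\<Sum>y\<in>X. if x = j \<and> y = j then v y else 0)"
      by (simp add: c_def ring_distribs sum.distrib sum_subtractf if_distrib[where f = "\<lambda>a. a * _"]
          cong: if_cong)
    also have "\<dots> = real (card (neighbours X F x)) * v x - (\<Sum>y\<in>neighbours X F x. v y)
        + (if x = j then v j else 0)"
      using x finite_nodes by (auto simp: neighbours_def sum.inter_filter)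
    also have "\<dots> = M v x"
      unfolding M_def laplacian_def by (simp add: sum_subtractf)
    finally show ?thesis .
  qed
  have sum_M: "(\<Sum>x\<in>X. M v x) = v j" for v
    unfolding M_def using finite_nodes j by (simp add: sum.distrib sum_laplacian_eq_0)
  have "\<exists>v. \<forall>x\<in>X. (\<Sum>y\<in>X. c x y * v y) = b x"
  proof (rule linear_system_solvable_if_injective[OF finite_nodes])
    fix v assume "\<forall>x\<in>X. (\<Sum>y\<in>X. c x y * v y) = 0"
    then have M0: "M v x = 0" if "x \<in> X" for x using M_linear that by simp
    then have vj: "v j = 0" using sum_M[of v] by simp
    have "laplacian X F v x = 0" if "x \<in> X" for x
      using M0[OF that] vj unfolding M_def by (cases "x = j") auto
    then show "\<forall>x\<in>X. v x = 0" using harmonic_imp_constant j vj by metis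
  qed
  then obtain v where v: "\<forall>x\<in>X. M v x = b x" using M_linear by auto
  then have "v j = 0" using sum_M[of v] balanced by simp
  then have "\<forall>x\<in>X. laplacian X F v x = b x" using v unfolding M_def by (metis add.right_neutral)
  then show ?thesis by auto
qed simp

lemma resistance_eqI:
  assumes i: "i \<in> X" and j: "j \<in> X"
    and v: "\<forall>x\<in>X. laplacian X F v x = (if x = i then 1 else 0) - (if x = j then 1 else 0)"
  shows "resistance X F i j = v i - v j"
  unfolding resistance_def
proof (rule the_equality)
  show "\<exists>v'. (\<forall>x\<in>X. (\<Sum>y\<in>{y\<in>X. adj F x y}. v' x - v' y) =
      (if x = i then 1 else 0) - (if x = j then 1 else 0)) \<and> v i - v j = v' i - v' j"
    using v unfolding laplacian_def neighbours_def by blast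
next
  fix r :: real assume "\<exists>w. (\<forall>x\<in>X. (\<Sum>y\<in>{y\<in>X. adj F x y}. w x - w y) =
      (if x = i then 1 else 0) - (if x = j then 1 else 0)) \<and> r = w i - w j"
  then obtain w where r: "r = w i - w j"
    and w: "\<forall>x\<in>X. laplacian X F w x = (if x = i then 1 else 0) - (if x = j then 1 else 0)"
    unfolding laplacian_def neighbours_def by blast
  have "laplacian X F (\<lambda>x. w x - v x) x = 0" if "x \<in> X" for x
    using w v that by (simp add: laplacian_diff)
  from harmonic_imp_constant[OF this i j] r show "r = v i - v j" by simp
qed

lemma resistance_self: "i \<in> X \<Longrightarrow> resistance X F i i = 0"
  using resistance_eqI[of i i "\<lambda>_. 0"] by (simp add: laplacian_def)

end

context
  fixes V :: "'a set" and E :: "'a set set"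
  assumes simple: "simple_graph V E"
begin

lemma edge_doubletonE:
  assumes "e \<in> E"
  obtains x y where "x \<noteq> y" "x \<in> V" "y \<in> V" "e = {x, y}"
  using simple assms unfolding simple_graph_def by blast

lemma edge_subset_vertices: "e \<in> E \<Longrightarrow> e \<subseteq> V"
  by (erule edge_doubletonE) simp

lemma card_edge: "e \<in> E \<Longrightarrow> card e = 2"
  by (erule edge_doubletonE) simp

lemma finite_vertices: "finite V"
  using simple by (simp add: simple_graph_def)

lemma finite_edges: "finite E"
proof -
  have "E \<subseteq> Pow V" using edge_subset_vertices by blast
  then show ?thesis using finite_vertices by (simp add: finite_subset)
qed

lemma finite_sub_vertices: "finite (sub_vertices V E)"
  unfolding sub_vertices_def using finite_vertices finite_edges by simp

lemma subdivision_neighbours_Inr: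
  "e \<in> E \<Longrightarrow> neighbours (sub_vertices V E) (subdivision_edges E) (Inr e) = Inl ` e"
  unfolding neighbours_def adj_def subdivision_edges_def sub_vertices_def
  using edge_subset_vertices by (auto simp: doubleton_eq_iff)

lemma subdivision_neighbours_Inl:
  "k \<in> V \<Longrightarrow> neighbours (sub_vertices V E) (subdivision_edges E) (Inl k) = Inr ` {e\<in>E. k \<in> e}"
  unfolding neighbours_def adj_def subdivision_edges_def sub_vertices_def
  using edge_subset_vertices by (auto simp: doubleton_eq_iff)

lemma triangulation_neighbours_Inr:
  "e \<in> E \<Longrightarrow> neighbours (sub_vertices V E) (triangulation_edges E) (Inr e) = Inl ` e"
  unfolding neighbours_def adj_def triangulation_edges_def subdivision_edges_def sub_vertices_def
  using edge_subset_vertices by (auto simp: doubleton_eq_iff)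

lemma doubleton_Inl_eq_image_Inl_iff:
  "({Inl k, Inl l} = (Inl ` e :: ('a + 'b) set)) \<longleftrightarrow> e = {k, l}"
  using inj_image_eq_iff[OF inj_Inl, of e "{k, l}"] by auto

lemma triangulation_neighbours_Inl:
  assumes k: "k \<in> V"
  shows "neighbours (sub_vertices V E) (triangulation_edges E) (Inl k)
    = Inr ` {e\<in>E. k \<in> e} \<union> Inl ` neighbours V E k"
proof -
  have "neighbours (sub_vertices V E) (triangulation_edges E) (Inl k)
      = neighbours (sub_vertices V E) (subdivision_edges E) (Inl k)
        \<union> {y \<in> sub_vertices V E. Inl k \<noteq> y \<and> {Inl k, y} \<in> (\<lambda>e. Inl ` e) ` E}"
    unfolding neighbours_def adj_def triangulation_edges_def by blast
  moreover have "{y \<in> sub_vertices V E. Inl k \<noteq> y \<and> {Inl k, y} \<in> (\<lambda>e. Inl ` e) ` E}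
      = Inl ` neighbours V E k"
  proof (intro equalityI subsetI)
    fix y assume "y \<in> {y \<in> sub_vertices V E. Inl k \<noteq> y \<and> {Inl k, y} \<in> (\<lambda>e. Inl ` e) ` E}"
    then obtain e where y: "y \<in> sub_vertices V E" "Inl k \<noteq> y" "e \<in> E" "{Inl k, y} = Inl ` e"
      by auto
    moreover obtain l where "y = Inl l"
      using y(4) by (cases y) (auto simp: doubleton_eq_iff)
    ultimately show "y \<in> Inl ` neighbours V E k"
      by (auto simp: doubleton_Inl_eq_image_Inl_iff neighbours_def adj_def sub_vertices_def)
  next
    fix y :: "'a + 'a set" assume "y \<in> Inl ` neighbours V E k"
    then obtain l where l: "y = Inl l" "l \<in> V" "k \<noteq> l" "{k, l} \<in> E"
      unfolding neighbours_def adj_def by auto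
    then have "{Inl k, y} \<in> (\<lambda>e. Inl ` e) ` E"
      by (metis doubleton_Inl_eq_image_Inl_iff image_eqI)
    then show "y \<in> {y \<in> sub_vertices V E. Inl k \<noteq> y \<and> {Inl k, y} \<in> (\<lambda>e. Inl ` e) ` E}"
      using l unfolding sub_vertices_def by auto
  qed
  ultimately show ?thesis by (simp add: subdivision_neighbours_Inl[OF k])
qed

lemma sum_neighbours_eq_sum_incident_edges:
  assumes k: "k \<in> V" and g: "g k = 0"
  shows "(\<Sum>l\<in>neighbours V E k. g l) = (\<Sum>e\<in>{e\<in>E. k \<in> e}. \<Sum>l\<in>e. g l)"
proof -
  have inj: "inj_on (\<lambda>l. {k, l}) (neighbours V E k)"
    unfolding inj_on_def neighbours_def adj_def by (auto simp: doubleton_eq_iff)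
  have image: "(\<lambda>l. {k, l}) ` neighbours V E k = {e\<in>E. k \<in> e}"
  proof (intro equalityI subsetI)
    fix e assume e: "e \<in> {e\<in>E. k \<in> e}"
    then obtain x y where "x \<noteq> y" "x \<in> V" "y \<in> V" "e = {x, y}"
      by (blast elim: edge_doubletonE)
    with e show "e \<in> (\<lambda>l. {k, l}) ` neighbours V E k"
      unfolding neighbours_def adj_def by (auto simp: insert_commute)
  qed (auto simp: neighbours_def adj_def)
  have "(\<Sum>e\<in>{e\<in>E. k \<in> e}. \<Sum>l\<in>e. g l) = (\<Sum>l\<in>neighbours V E k. \<Sum>m\<in>{k, l}. g m)"
    unfolding image[symmetric] by (rule sum.reindex[OF inj, unfolded comp_def])
  also have "\<dots> = (\<Sum>l\<in>neighbours V E k. g l)"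
    by (intro sum.cong refl) (auto simp: neighbours_def adj_def g)
  finally show ?thesis by simp
qed

lemma subdivision_network:
  assumes connected: "connected_graph V E"
  shows "resistor_network (sub_vertices V E) (subdivision_edges E)"
proof
  let ?R = "adj (subdivision_edges E)"
  have incident: "?R (Inl k) (Inr e)" "?R (Inr e) (Inl k)" if "e \<in> E" "k \<in> e" for k e
    using that unfolding adj_def subdivision_edges_def by (auto simp: insert_commute)
  have lift: "?R\<^sup>*\<^sup>* (Inl k) (Inl l)" if "(adj E)\<^sup>*\<^sup>* k l" for k l
    using that
  proof (induction rule: rtranclp_induct)
    case (step l m)
    then have "{l, m} \<in> E" unfolding adj_def by simp
    with incident step.IH show ?case
      by (meson insertI1 insertI2 singletonI rtranclp.rtrancl_into_rtrancl)
  qed simp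
  have to_old: "\<exists>k\<in>V. ?R\<^sup>*\<^sup>* x (Inl k) \<and> ?R\<^sup>*\<^sup>* (Inl k) x"
    if x: "x \<in> sub_vertices V E" for x
  proof (cases x)
    case (Inr e)
    then have e: "e \<in> E" using x unfolding sub_vertices_def by auto
    then obtain p q where "p \<in> V" "e = {p, q}" by (rule edge_doubletonE)
    with incident[OF e, of p] Inr show ?thesis by (meson insertI1 r_into_rtranclp)
  qed (use x in \<open>auto simp: sub_vertices_def\<close>)
  fix x y assume x: "x \<in> sub_vertices V E" and y: "y \<in> sub_vertices V E"
  obtain k l where "k \<in> V" "?R\<^sup>*\<^sup>* x (Inl k)" "l \<in> V" "?R\<^sup>*\<^sup>* (Inl l) y"
    using to_old[OF x] to_old[OF y] by blast
  with lift connected show "?R\<^sup>*\<^sup>* x y"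
    unfolding connected_graph_def by (meson rtranclp_trans)
qed (use finite_sub_vertices edge_subset_vertices in
      \<open>auto simp: adj_def subdivision_edges_def sub_vertices_def doubleton_eq_iff\<close>)

lemma triangulation_network:
  assumes connected: "connected_graph V E"
  shows "resistor_network (sub_vertices V E) (triangulation_edges E)"
proof
  interpret S: resistor_network "sub_vertices V E" "subdivision_edges E"
    by (rule subdivision_network[OF connected])
  have sub: "adj (subdivision_edges E) a b \<longrightarrow> adj (triangulation_edges E) a b" for a b
    unfolding adj_def triangulation_edges_def by auto
  fix x y
  show "finite (sub_vertices V E)" by (rule S.finite_nodes)
  show "x \<in> sub_vertices V E \<Longrightarrow> y \<in> sub_vertices V E \<Longrightarrow>
      (adj (triangulation_edges E))\<^sup>*\<^sup>* x y"
    using S.connected sub by (metis mono_rtranclp)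
  assume "adj (triangulation_edges E) x y"
  then consider "adj (subdivision_edges E) x y" | e where "e \<in> E" "{x, y} = Inl ` e"
    unfolding adj_def triangulation_edges_def by auto
  then show "x \<in> sub_vertices V E \<and> y \<in> sub_vertices V E"
  proof cases
    case (2 e)
    then have "{x, y} \<subseteq> Inl ` V" using edge_subset_vertices by blast
    then show ?thesis unfolding sub_vertices_def by auto
  qed (rule S.adj_nodes)
qed

lemma triangulation_potential:
  fixes v b :: "'a + 'a set \<Rightarrow> real"
  defines "u x \<equiv> case x of Inl _ \<Rightarrow> v x / 3 | Inr _ \<Rightarrow> (v x + b x) / 3"
  assumes v: "\<forall>x\<in>sub_vertices V E. laplacian (sub_vertices V E) (subdivision_edges E) v x = b x"
  shows "\<forall>x\<in>sub_vertices V E. laplacian (sub_vertices V E) (triangulation_edges E) u x = b x"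
proof
  let ?X = "sub_vertices V E"
  have edge_sum: "(\<Sum>l\<in>e. t - f l) = 2 * t - (\<Sum>l\<in>e. f l)"
    if "e \<in> E" for e and f :: "'a \<Rightarrow> real" and t
    using card_edge[OF that] by (simp add: sum_subtractf)
  have kirchhoff_new: "b (Inr e) = 2 * v (Inr e) - (\<Sum>l\<in>e. v (Inl l))" if e: "e \<in> E" for e
  proof -
    have "b (Inr e) = laplacian ?X (subdivision_edges E) v (Inr e)"
      using v e by (simp add: sub_vertices_def)
    also have "\<dots> = (\<Sum>l\<in>e. v (Inr e) - v (Inl l))"
      unfolding laplacian_def subdivision_neighbours_Inr[OF e] by (simp add: sum.reindex)
    finally show ?thesis using edge_sum[OF e] by simp
  qed
  fix x assume x: "x \<in> ?X"
  show "laplacian ?X (triangulation_edges E) u x = b x"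
  proof (cases x)
    case (Inr e)
    then have e: "e \<in> E" using x unfolding sub_vertices_def by auto
    have "laplacian ?X (triangulation_edges E) u x = (\<Sum>l\<in>e. u (Inr e) - u (Inl l))"
      unfolding laplacian_def Inr triangulation_neighbours_Inr[OF e] by (simp add: sum.reindex)
    also have "\<dots> = 2 * u (Inr e) - (\<Sum>l\<in>e. v (Inl l)) / 3"
      using edge_sum[OF e, where t = "u (Inr e)" and f = "\<lambda>l. v (Inl l) / 3"]
      by (simp add: u_def sum_divide_distrib)
    also have "\<dots> = b x"
      using kirchhoff_new[OF e] by (simp add: Inr u_def field_simps)
    finally show ?thesis .
  next
    case (Inl k)
    then have k: "k \<in> V" using x unfolding sub_vertices_def by auto
    let ?Ek = "{e\<in>E. k \<in> e}"
    have "laplacian ?X (triangulation_edges E) u x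
        = (\<Sum>e\<in>?Ek. u (Inl k) - u (Inr e)) + (\<Sum>l\<in>neighbours V E k. u (Inl k) - u (Inl l))"
      unfolding laplacian_def Inl triangulation_neighbours_Inl[OF k]
      using finite_vertices finite_edges
      by (subst sum.union_disjoint) (auto simp: sum.reindex neighbours_def sub_vertices_def)
    also have "(\<Sum>l\<in>neighbours V E k. u (Inl k) - u (Inl l))
        = (\<Sum>e\<in>?Ek. \<Sum>l\<in>e. u (Inl k) - u (Inl l))"
      by (rule sum_neighbours_eq_sum_incident_edges[OF k]) simp
    also have "(\<Sum>e\<in>?Ek. u (Inl k) - u (Inr e)) + \<dots> = (\<Sum>e\<in>?Ek. v (Inl k) - v (Inr e))"
      unfolding sum.distrib[symmetric]
    proof (rule sum.cong[OF refl])
      fix e assume "e \<in> ?Ek"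
      then have e: "e \<in> E" by simp
      show "u (Inl k) - u (Inr e) + (\<Sum>l\<in>e. u (Inl k) - u (Inl l)) = v (Inl k) - v (Inr e)"
        using edge_sum[OF e, where t = "u (Inl k)" and f = "\<lambda>l. v (Inl l) / 3"] kirchhoff_new[OF e]
        by (simp add: u_def sum_divide_distrib[symmetric] field_simps)
    qed
    also have "\<dots> = laplacian ?X (subdivision_edges E) v x"
      unfolding laplacian_def Inl subdivision_neighbours_Inl[OF k] by (simp add: sum.reindex)
    also have "\<dots> = b x" using v x by simp
    finally show ?thesis .
  qed
qed

lemma resistance_triangulation:
  assumes connected: "connected_graph V E"
    and a: "a \<in> sub_vertices V E" and c: "c \<in> sub_vertices V E" and "a \<noteq> c"
  shows "3 * resistance (sub_vertices V E) (triangulation_edges E) a c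
    = resistance (sub_vertices V E) (subdivision_edges E) a c
      + of_bool (a \<in> Inr ` E) + of_bool (c \<in> Inr ` E)"
proof -
  interpret S: resistor_network "sub_vertices V E" "subdivision_edges E"
    by (rule subdivision_network[OF connected])
  interpret T: resistor_network "sub_vertices V E" "triangulation_edges E"
    by (rule triangulation_network[OF connected])
  define b where "b x = (if x = a then 1 else 0) - (if x = c then 1 else (0::real))" for x
  have "(\<Sum>x\<in>sub_vertices V E. b x) = 0"
    unfolding b_def using S.finite_nodes a c by (simp add: sum_subtractf)
  then obtain v
    where v: "\<forall>x\<in>sub_vertices V E. laplacian (sub_vertices V E) (subdivision_edges E) v x = b x"
    using S.laplacian_solvable by blast
  define u where "u x = (case x of Inl _ \<Rightarrow> v x / 3 | Inr _ \<Rightarrow> (v x + b x) / 3)" for x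
  have "resistance (sub_vertices V E) (subdivision_edges E) a c = v a - v c"
    using S.resistance_eqI[OF a c] v unfolding b_def by blast
  moreover have "resistance (sub_vertices V E) (triangulation_edges E) a c = u a - u c"
    using T.resistance_eqI[OF a c] triangulation_potential[OF v] unfolding u_def b_def by blast
  ultimately show ?thesis
    using a c \<open>a \<noteq> c\<close> unfolding u_def b_def sub_vertices_def
    by (cases a; cases c) (auto simp: field_simps)
qed

end

theorem proposition4p2:
  fixes V :: "'a set" and E :: "'a set set"
  assumes "simple_graph V E" and "connected_graph V E"
  shows "(\<forall>i\<in>V. \<forall>j\<in>V.
            resistance (sub_vertices V E) (triangulation_edges E) (Inl i) (Inl j) =
            resistance (sub_vertices V E) (subdivision_edges E) (Inl i) (Inl j) / 3)
       \<and> (\<forall>i\<in>E. \<forall>j\<in>V.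
            resistance (sub_vertices V E) (triangulation_edges E) (Inr i) (Inl j) =
            resistance (sub_vertices V E) (subdivision_edges E) (Inr i) (Inl j) / 3 + 1 / 3)
       \<and> (\<forall>i\<in>E. \<forall>j\<in>E. i \<noteq> j \<longrightarrow>
            resistance (sub_vertices V E) (triangulation_edges E) (Inr i) (Inr j) =
            resistance (sub_vertices V E) (subdivision_edges E) (Inr i) (Inr j) / 3 + 2 / 3)"
proof -
  have old: "Inl i \<in> sub_vertices V E" if "i \<in> V" for i
    using that by (simp add: sub_vertices_def)
  have new: "Inr e \<in> sub_vertices V E" if "e \<in> E" for e
    using that by (simp add: sub_vertices_def)
  note triangulation = resistance_triangulation[OF assms]
  interpret S: resistor_network "sub_vertices V E" "subdivision_edges E"
    by (rule subdivision_network[OF assms])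
  interpret T: resistor_network "sub_vertices V E" "triangulation_edges E"
    by (rule triangulation_network[OF assms])
  show ?thesis
  proof (intro conjI ballI impI)
    fix i j assume "i \<in> V" "j \<in> V"
    then show "resistance (sub_vertices V E) (triangulation_edges E) (Inl i) (Inl j) =
        resistance (sub_vertices V E) (subdivision_edges E) (Inl i) (Inl j) / 3"
      using triangulation[OF old old, of i j] S.resistance_self T.resistance_self old
      by (cases "i = j") (auto simp: image_iff)
  next
    fix i j assume "i \<in> E" "j \<in> V"
    then show "resistance (sub_vertices V E) (triangulation_edges E) (Inr i) (Inl j) =
        resistance (sub_vertices V E) (subdivision_edges E) (Inr i) (Inl j) / 3 + 1 / 3"
      using triangulation[OF new old, of i j] by (auto simp: image_iff)
  next
    fix i j assume "i \<in> E" "j \<in> E" "i \<noteq> j"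
    then show "resistance (sub_vertices V E) (triangulation_edges E) (Inr i) (Inr j) =
        resistance (sub_vertices V E) (subdivision_edges E) (Inr i) (Inr j) / 3 + 2 / 3"
      using triangulation[OF new new, of i j] by (auto simp: image_iff)
  qed
qed

end
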